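(* Let $(A,B)$ and $(A',B')$ be two weakly non-singular pairs of loxodromic elements in $\mathrm{Sp}(n,1)$, with associated tuples $p=(p_1,\dots,p_{2n})$ and $p'=(p'_1,\dots,p'_{2n})$ and normalized Gram matrices $G(p)$, $G(p')$. Then there exists $C\in\mathrm{Sp}(n,1)$ with $C(p_i)=p'_i$ for $i=1,\dots,2n$ if and only if $O_{G(p)}=O_{G(p')}$.
   Context: $\mathbb H^{n,1}$: right $\mathbb H$-vector space $\mathbb H^{n+1}$ with form $\langle\mathbf z,\mathbf w\rangle=\bar w_{n+1}z_1+\bar w_2z_2+\dots+\bar w_nz_n+\bar w_1z_{n+1}$; points of $\mathbb H\mathbb P^n$ are right lines, $\mathbf z\mapsto z$. $\mathrm{Sp}(n,1)$ preserves the form. A loxodromic $A$ (exactly two boundary fixed points, no real eigenvalue) has null eigenvectors $\mathbf a_A,\mathbf r_A$ (attracting/repelling fixed points $a_A,r_A$) and positive eigenvectors $\mathbf x_{j,A}$, $1\le j\le n-1$ (points $x_{j,A}$). A pair $(A,B)$ is weakly non-singular if $A,B$ are regular (right-eigenvalue similarity classes pairwise distinct), have no common fixed point, and $n-2$ canonical flags $(a_A,L_A,W_{j,A})$ of $A$ form generic pairs with $n-2$ canonical flags of $B$ (here $L_A$ is the $\mathbb H$-line through $a_A,r_A$, $W_{j,A}$ the projectivization of $\mathbf x_{j,A}^\perp$; flags $(p,C,\Pi),(p',C',\Pi')$ are a generic pair if $p\notin\partial C'$, $p'\notin\partial C$, $\partial C\cap\partial\Pi'=\emptyset=\partial C'\cap\partial\Pi$);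 indices are arranged so that for $1\le k\le n-2$, $\langle\mathbf x_{k,A},\mathbf a_B\rangle,\langle\mathbf x_{k,B},\mathbf a_A\rangle,\langle\mathbf r_A,\mathbf x_{k,B}\rangle,\langle\mathbf r_B,\mathbf x_{k,A}\rangle\ne0$. Associated tuple: $p_1=a_A,p_2=r_A,p_3=a_B,p_4=r_B$, $p_j=x_{j-4,A}$ ($5\le j\le n+2$), $p_k=x_{k-(n+2),B}$ ($n+3\le k\le 2n$). The Gram matrix $G(p)=(\langle\mathbf p_i,\mathbf p_j\rangle)$ is normalized if the lifts satisfy $g_{12}=g_{13}=g_{14}=1$, $|g_{23}|=1$, $g_{1k}=1$ ($n+3\le k\le 2n$), $g_{3j}=1$ ($5\le j\le n+2$); it is well defined up to the action $g_{ij}\mapsto\mu g_{ij}\bar\mu$ of $\mu\in\mathrm{Sp}(1)$ (unit quaternions). $O_{G(p)}=\{(\mu g_{ij}\bar\mu)_{i,j}:\mu\in\mathrm{Sp}(1)\}$ is this $\mathrm{Sp}(1)$-orbit. *)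

theory Defs
  imports Complex_Main
begin

datatype quat = Quat (qr: real) (qi: real) (qj: real) (qk: real)

instantiation quat :: comm_monoid_add
begin
definition zero_quat :: quat where "zero_quat = Quat 0 0 0 0"
definition plus_quat :: "quat \<Rightarrow> quat \<Rightarrow> quat" where
  "plus_quat p q = Quat (qr p + qr q) (qi p + qi q) (qj p + qj q) (qk p + qk q)"
instance by standard (auto simp: zero_quat_def plus_quat_def)
end

instantiation quat :: "{times, one}"
begin
definition one_quat :: quat where "one_quat = Quat 1 0 0 0"
definition times_quat :: "quat \<Rightarrow> quat \<Rightarrow> quat" where
  "times_quat p q = Quat
     (qr p * qr q - qi p * qi q - qj p * qj q - qk p * qk q)
     (qr p * qi q + qi p * qr q + qj p * qk q - qk p * qj q)
     (qr p * qj q - qi p * qk q + qj p * qr q + qk p * qi q)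
     (qr p * qk q + qi p * qj q - qj p * qi q + qk p * qr q)"
instance ..
end

definition qcnj :: "quat \<Rightarrow> quat" where
  "qcnj q = Quat (qr q) (- qi q) (- qj q) (- qk q)"

definition qnorm :: "quat \<Rightarrow> real" where
  "qnorm q = sqrt ((qr q)\<^sup>2 + (qi q)\<^sup>2 + (qj q)\<^sup>2 + (qk q)\<^sup>2)"

definition qreal :: "quat \<Rightarrow> bool" where
  "qreal q \<longleftrightarrow> qi q = 0 \<and> qj q = 0 \<and> qk q = 0"

definition qsimilar :: "quat \<Rightarrow> quat \<Rightarrow> bool" where
  "qsimilar \<mu> \<nu> \<longleftrightarrow> (\<exists>q. q \<noteq> 0 \<and> q * \<nu> = \<mu> * q)"

text \<open>Vectors of \<open>\<bbbH>\<^sup>n\<^sup>+\<^sup>1\<close> are functions \<open>nat \<Rightarrow> quat\<close> supported on \<open>{1..n+1}\<close>;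
  matrices are functions \<open>nat \<Rightarrow> nat \<Rightarrow> quat\<close> supported on \<open>{1..n+1}\<^sup>2\<close>.\<close>

definition hvec :: "nat \<Rightarrow> (nat \<Rightarrow> quat) \<Rightarrow> bool" where
  "hvec n z \<longleftrightarrow> (\<forall>i. i \<notin> {1..n+1} \<longrightarrow> z i = 0)"

definition hmat :: "nat \<Rightarrow> (nat \<Rightarrow> nat \<Rightarrow> quat) \<Rightarrow> bool" where
  "hmat n C \<longleftrightarrow> (\<forall>i j. i \<notin> {1..n+1} \<or> j \<notin> {1..n+1} \<longrightarrow> C i j = 0)"

definition mv :: "nat \<Rightarrow> (nat \<Rightarrow> nat \<Rightarrow> quat) \<Rightarrow> (nat \<Rightarrow> quat) \<Rightarrow> nat \<Rightarrow> quat" where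
  "mv n C z = (\<lambda>i. if i \<in> {1..n+1} then (\<Sum>j=1..n+1. C i j * z j) else 0)"

definition rscale :: "(nat \<Rightarrow> quat) \<Rightarrow> quat \<Rightarrow> nat \<Rightarrow> quat" where
  "rscale z c = (\<lambda>i. z i * c)"

definition hform :: "nat \<Rightarrow> (nat \<Rightarrow> quat) \<Rightarrow> (nat \<Rightarrow> quat) \<Rightarrow> quat" where
  "hform n z w = qcnj (w (n+1)) * z 1 + (\<Sum>i=2..n. qcnj (w i) * z i) + qcnj (w 1) * z (n+1)"

definition Sp_n1 :: "nat \<Rightarrow> (nat \<Rightarrow> nat \<Rightarrow> quat) set" where
  "Sp_n1 n = {C. hmat n C
     \<and> (\<forall>z w. hvec n z \<longrightarrow> hvec n w \<longrightarrow> hform n (mv n C z) (mv n C w) = hform n z w)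
     \<and> (\<exists>D. hmat n D \<and> (\<forall>z. hvec n z \<longrightarrow> mv n D (mv n C z) = z \<and> mv n C (mv n D z) = z))}"

text \<open>Two nonzero vectors represent the same point of \<open>\<bbbH>\<bbbP>\<^sup>n\<close> (same right line).\<close>
definition same_point :: "(nat \<Rightarrow> quat) \<Rightarrow> (nat \<Rightarrow> quat) \<Rightarrow> bool" where
  "same_point z w \<longleftrightarrow> (\<exists>c. c \<noteq> 0 \<and> w = rscale z c)"

definition hpoint :: "(nat \<Rightarrow> quat) \<Rightarrow> (nat \<Rightarrow> quat) set" where
  "hpoint z = {rscale z c | c. True}"

definition null_vec :: "nat \<Rightarrow> (nat \<Rightarrow> quat) \<Rightarrow> bool" where
  "null_vec n z \<longleftrightarrow> hvec n z \<and> z \<noteq> (\<lambda>_. 0) \<and> hform n z z = 0"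

definition pos_vec :: "nat \<Rightarrow> (nat \<Rightarrow> quat) \<Rightarrow> bool" where
  "pos_vec n z \<longleftrightarrow> hvec n z \<and> qr (hform n z z) > 0"

definition eigvec :: "nat \<Rightarrow> (nat \<Rightarrow> nat \<Rightarrow> quat) \<Rightarrow> (nat \<Rightarrow> quat) \<Rightarrow> quat \<Rightarrow> bool" where
  "eigvec n C z c \<longleftrightarrow> hvec n z \<and> z \<noteq> (\<lambda>_. 0) \<and> mv n C z = rscale z c"

text \<open>Fixed points of \<open>C\<close> on the boundary \<open>\<partial>\<bbbH>\<^sup>n\<^sub>\<bbbH>\<close> (null right lines).\<close>
definition bdry_fixed_points :: "nat \<Rightarrow> (nat \<Rightarrow> nat \<Rightarrow> quat) \<Rightarrow> (nat \<Rightarrow> quat) set set" where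
  "bdry_fixed_points n C = {hpoint z | z. null_vec n z \<and> (\<exists>c. eigvec n C z c)}"

definition loxodromic :: "nat \<Rightarrow> (nat \<Rightarrow> nat \<Rightarrow> quat) \<Rightarrow> bool" where
  "loxodromic n C \<longleftrightarrow> C \<in> Sp_n1 n \<and> card (bdry_fixed_points n C) = 2
     \<and> \<not> (\<exists>z c. eigvec n C z c \<and> qreal c)"

text \<open>Regular: the right-eigenvalue similarity classes are pairwise distinct, i.e.
  each similarity class of eigenvalues has a single eigen-line.\<close>
definition regular :: "nat \<Rightarrow> (nat \<Rightarrow> nat \<Rightarrow> quat) \<Rightarrow> bool" where
  "regular n C \<longleftrightarrow> (\<forall>z w \<mu> \<nu>. eigvec n C z \<mu> \<longrightarrow> eigvec n C w \<nu> \<longrightarrow> qsimilar \<mu> \<nu>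
      \<longrightarrow> same_point z w)"

definition attracting_vec :: "nat \<Rightarrow> (nat \<Rightarrow> nat \<Rightarrow> quat) \<Rightarrow> (nat \<Rightarrow> quat) \<Rightarrow> bool" where
  "attracting_vec n C a \<longleftrightarrow> null_vec n a \<and> (\<exists>c. eigvec n C a c \<and> qnorm c > 1)"

definition repelling_vec :: "nat \<Rightarrow> (nat \<Rightarrow> nat \<Rightarrow> quat) \<Rightarrow> (nat \<Rightarrow> quat) \<Rightarrow> bool" where
  "repelling_vec n C r \<longleftrightarrow> null_vec n r \<and> (\<exists>c. eigvec n C r c \<and> qnorm c < 1)"

definition pos_eigvec :: "nat \<Rightarrow> (nat \<Rightarrow> nat \<Rightarrow> quat) \<Rightarrow> (nat \<Rightarrow> quat) \<Rightarrow> bool" where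
  "pos_eigvec n C x \<longleftrightarrow> pos_vec n x \<and> (\<exists>c. eigvec n C x c)"

text \<open>No common fixed point in \<open>\<bbbH>\<^sup>n\<^sub>\<bbbH> \<union> \<partial>\<bbbH>\<^sup>n\<^sub>\<bbbH>\<close> (non-positive right lines).\<close>
definition no_common_fixed_point :: "nat \<Rightarrow> (nat \<Rightarrow> nat \<Rightarrow> quat) \<Rightarrow> (nat \<Rightarrow> nat \<Rightarrow> quat) \<Rightarrow> bool" where
  "no_common_fixed_point n A B \<longleftrightarrow>
     \<not> (\<exists>z c \<mu>. qr (hform n z z) \<le> 0 \<and> eigvec n A z c \<and> eigvec n B z \<mu>)"

text \<open>Subspaces are represented as sets of vectors; the boundary \<open>\<partial>S\<close> of (the projectivization
  of) a subspace \<open>S\<close> is the set of null vectors in \<open>S\<close>.\<close>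
definition bdry :: "nat \<Rightarrow> (nat \<Rightarrow> quat) set \<Rightarrow> (nat \<Rightarrow> quat) set" where
  "bdry n S = {z \<in> S. null_vec n z}"

definition hline :: "(nat \<Rightarrow> quat) \<Rightarrow> (nat \<Rightarrow> quat) \<Rightarrow> (nat \<Rightarrow> quat) set" where
  "hline a r = {(\<lambda>i. a i * \<alpha> + r i * \<beta>) | \<alpha> \<beta>. True}"

definition perp :: "nat \<Rightarrow> (nat \<Rightarrow> quat) \<Rightarrow> (nat \<Rightarrow> quat) set" where
  "perp n x = {z. hvec n z \<and> hform n z x = 0}"

definition canonical_flag :: "nat \<Rightarrow> (nat \<Rightarrow> quat) \<Rightarrow> (nat \<Rightarrow> quat) \<Rightarrow> (nat \<Rightarrow> quat)
    \<Rightarrow> (nat \<Rightarrow> quat) \<times> (nat \<Rightarrow> quat) set \<times> (nat \<Rightarrow> quat) set" where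
  "canonical_flag n a r x = (a, hline a r, perp n x)"

definition generic_pair :: "nat
    \<Rightarrow> (nat \<Rightarrow> quat) \<times> (nat \<Rightarrow> quat) set \<times> (nat \<Rightarrow> quat) set
    \<Rightarrow> (nat \<Rightarrow> quat) \<times> (nat \<Rightarrow> quat) set \<times> (nat \<Rightarrow> quat) set \<Rightarrow> bool" where
  "generic_pair n F F' = (case F of (p, C, \<Pi>) \<Rightarrow> case F' of (p', C', \<Pi>') \<Rightarrow>
      p \<notin> bdry n C' \<and> p' \<notin> bdry n C
      \<and> bdry n C \<inter> bdry n \<Pi>' = {} \<and> bdry n C' \<inter> bdry n \<Pi> = {})"

definition wns_data :: "nat \<Rightarrow> (nat \<Rightarrow> nat \<Rightarrow> quat) \<Rightarrow> (nat \<Rightarrow> nat \<Rightarrow> quat)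
    \<Rightarrow> (nat \<Rightarrow> quat) \<Rightarrow> (nat \<Rightarrow> quat) \<Rightarrow> (nat \<Rightarrow> quat) \<Rightarrow> (nat \<Rightarrow> quat)
    \<Rightarrow> (nat \<Rightarrow> nat \<Rightarrow> quat) \<Rightarrow> (nat \<Rightarrow> nat \<Rightarrow> quat) \<Rightarrow> bool" where
  "wns_data n A B aA rA aB rB xA xB \<longleftrightarrow>
     attracting_vec n A aA \<and> repelling_vec n A rA \<and>
     attracting_vec n B aB \<and> repelling_vec n B rB \<and>
     (\<forall>k\<in>{1..n-2}. pos_eigvec n A (xA k) \<and> pos_eigvec n B (xB k)) \<and>
     (\<forall>k\<in>{1..n-2}. \<forall>l\<in>{1..n-2}. k \<noteq> l \<longrightarrow>
        \<not> same_point (xA k) (xA l) \<and> \<not> same_point (xB k) (xB l)) \<and>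
     (\<forall>k\<in>{1..n-2}. generic_pair n (canonical_flag n aA rA (xA k)) (canonical_flag n aB rB (xB k)))"

definition weakly_nonsingular :: "nat \<Rightarrow> (nat \<Rightarrow> nat \<Rightarrow> quat) \<Rightarrow> (nat \<Rightarrow> nat \<Rightarrow> quat) \<Rightarrow> bool" where
  "weakly_nonsingular n A B \<longleftrightarrow>
     loxodromic n A \<and> loxodromic n B \<and> regular n A \<and> regular n B \<and>
     no_common_fixed_point n A B \<and>
     (\<exists>aA rA aB rB xA xB. wns_data n A B aA rA aB rB xA xB)"

text \<open>\<open>p\<close> is (a lift of) the associated tuple of the weakly non-singular pair \<open>(A,B)\<close>:
  \<open>p\<^sub>1 = a\<^sub>A, p\<^sub>2 = r\<^sub>A, p\<^sub>3 = a\<^sub>B, p\<^sub>4 = r\<^sub>B\<close>, \<open>p\<^sub>j = x\<^sub>j\<^sub>-\<^sub>4\<^sub>,\<^sub>A\<close> (\<open>5 \<le> j \<le> n+2\<close>),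
  \<open>p\<^sub>k = x\<^sub>k\<^sub>-\<^sub>(\<^sub>n\<^sub>+\<^sub>2\<^sub>)\<^sub>,\<^sub>B\<close> (\<open>n+3 \<le> k \<le> 2n\<close>), with the indices arranged as in the paper.\<close>
definition associated_tuple :: "nat \<Rightarrow> (nat \<Rightarrow> nat \<Rightarrow> quat) \<Rightarrow> (nat \<Rightarrow> nat \<Rightarrow> quat)
    \<Rightarrow> (nat \<Rightarrow> nat \<Rightarrow> quat) \<Rightarrow> bool" where
  "associated_tuple n A B p \<longleftrightarrow>
     wns_data n A B (p 1) (p 2) (p 3) (p 4) (\<lambda>k. p (k + 4)) (\<lambda>k. p (k + (n + 2))) \<and>
     (\<forall>k\<in>{1..n-2}.
        hform n (p (k + 4)) (p 3) \<noteq> 0 \<and> hform n (p (k + (n + 2))) (p 1) \<noteq> 0 \<and>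
        hform n (p 2) (p (k + (n + 2))) \<noteq> 0 \<and> hform n (p 4) (p (k + 4)) \<noteq> 0)"

definition gram :: "nat \<Rightarrow> (nat \<Rightarrow> nat \<Rightarrow> quat) \<Rightarrow> nat \<Rightarrow> nat \<Rightarrow> quat" where
  "gram n p = (\<lambda>i j. if i \<in> {1..2*n} \<and> j \<in> {1..2*n} then hform n (p i) (p j) else 0)"

definition gram_normalized :: "nat \<Rightarrow> (nat \<Rightarrow> nat \<Rightarrow> quat) \<Rightarrow> bool" where
  "gram_normalized n p \<longleftrightarrow>
     (let g = gram n p in
       g 1 2 = 1 \<and> g 1 3 = 1 \<and> g 1 4 = 1 \<and> qnorm (g 2 3) = 1 \<and>
       (\<forall>k\<in>{n+3..2*n}. g 1 k = 1) \<and> (\<forall>j\<in>{5..n+2}. g 3 j = 1))"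

definition sp1_orbit :: "(nat \<Rightarrow> nat \<Rightarrow> quat) \<Rightarrow> (nat \<Rightarrow> nat \<Rightarrow> quat) set" where
  "sp1_orbit G = {(\<lambda>i j. \<mu> * G i j * qcnj \<mu>) | \<mu>. qnorm \<mu> = 1}"

end

theory Submission
  imports Defs
begin

text \<open>If \<open>C \<in> Sp(n,1)\<close> maps each \<open>p\<^sub>i\<close> to \<open>p'\<^sub>i c\<^sub>i\<^sup>-\<^sup>1\<close>, then
  \<open>G(p')\<^sub>i\<^sub>j = c\<^sub>j\<^sup>- G(p)\<^sub>i\<^sub>j c\<^sub>i\<close>, and the normalised entries of both Gram matrices force all
  \<open>c\<^sub>i\<close> to be one and the same unit quaternion \<open>b\<close>; hence \<open>G(p') = b\<^sup>- G(p) b \<in> O\<^sub>G\<^sub>(\<^sub>p\<^sub>)\<close>.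
  Conversely, if \<open>G(p) = \<nu> G(p') \<nu>\<^sup>-\<close> with \<open>|\<nu>| = 1\<close>, the vectors \<open>p'\<^sub>i \<nu>\<^sup>-\<close> have exactly the
  Gram matrix of \<open>p\<close>, and a Witt-type extension theorem gives \<open>C \<in> Sp(n,1)\<close> with
  \<open>C p\<^sub>i = p'\<^sub>i \<nu>\<^sup>-\<close>. Witt's theorem is proved by adjoining one vector at a time with a
  quaternionic reflection \<open>z \<mapsto> z - d s \<langle>z,d\<rangle>\<close>, \<open>d = u - u'\<close>. The reflection exists because
  \<open>d\<close> is anisotropic: it is orthogonal to the negative vector \<open>p\<^sub>1 - p\<^sub>2\<close>, whose orthogonal
  complement is positive definite.\<close>

section \<open>Quaternions as a division ring\<close>

instantiation quat :: "{uminus, minus}"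
begin
definition uminus_quat :: "quat \<Rightarrow> quat" where
  "uminus_quat q = Quat (- qr q) (- qi q) (- qj q) (- qk q)"
definition minus_quat :: "quat \<Rightarrow> quat \<Rightarrow> quat" where
  "minus_quat p q = Quat (qr p - qr q) (qi p - qi q) (qj p - qj q) (qk p - qk q)"
instance ..
end

lemma quat_components [simp]:
  "qr 0 = 0" "qi 0 = 0" "qj 0 = 0" "qk 0 = 0"
  "qr 1 = 1" "qi 1 = 0" "qj 1 = 0" "qk 1 = 0"
  "qr (p + q) = qr p + qr q" "qi (p + q) = qi p + qi q"
  "qj (p + q) = qj p + qj q" "qk (p + q) = qk p + qk q"
  "qr (p - q) = qr p - qr q" "qi (p - q) = qi p - qi q"
  "qj (p - q) = qj p - qj q" "qk (p - q) = qk p - qk q"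
  "qr (- q) = - qr q" "qi (- q) = - qi q" "qj (- q) = - qj q" "qk (- q) = - qk q"
  "qr (p * q) = qr p * qr q - qi p * qi q - qj p * qj q - qk p * qk q"
  "qi (p * q) = qr p * qi q + qi p * qr q + qj p * qk q - qk p * qj q"
  "qj (p * q) = qr p * qj q - qi p * qk q + qj p * qr q + qk p * qi q"
  "qk (p * q) = qr p * qk q + qi p * qj q - qj p * qi q + qk p * qr q"
  by (simp_all add: zero_quat_def one_quat_def plus_quat_def minus_quat_def uminus_quat_def
      times_quat_def)

lemma quat_eq_iff: "p = q \<longleftrightarrow> qr p = qr q \<and> qi p = qi q \<and> qj p = qj q \<and> qk p = qk q"
  by (cases p; cases q) auto

instance quat :: ring_1
  by standard (simp_all add: quat_eq_iff algebra_simps)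

lemma qr_numeral [simp]: "qr (numeral k) = numeral k"
  by (induction k) (simp_all only: numeral_One numeral_Bit0 numeral_Bit1 quat_components)

definition qnormsq :: "quat \<Rightarrow> real" where
  "qnormsq q = (qr q)\<^sup>2 + (qi q)\<^sup>2 + (qj q)\<^sup>2 + (qk q)\<^sup>2"

lemma qnormsq_nonneg: "qnormsq q \<ge> 0"
  by (simp add: qnormsq_def)

lemma qnormsq_pos: "q \<noteq> 0 \<Longrightarrow> qnormsq q > 0"
  by (auto simp: qnormsq_def quat_eq_iff add_pos_nonneg add_nonneg_pos)

lemma qnormsq_eq_0_iff: "qnormsq q = 0 \<longleftrightarrow> q = 0"
  using qnormsq_pos[of q] by (cases "q = 0") (auto simp: qnormsq_def)

instantiation quat :: inverse
begin
definition inverse_quat :: "quat \<Rightarrow> quat" where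
  "inverse_quat q = Quat (qr q / qnormsq q) (- qi q / qnormsq q) (- qj q / qnormsq q)
     (- qk q / qnormsq q)"
definition divide_quat :: "quat \<Rightarrow> quat \<Rightarrow> quat" where
  "divide_quat p q = p * inverse q"
instance ..
end

instance quat :: division_ring
proof
  fix a :: quat assume "a \<noteq> 0"
  then have m: "qnormsq a \<noteq> 0" using qnormsq_pos[of a] by simp
  show "inverse a * a = 1" "a * inverse a = 1"
    using m by (simp_all add: quat_eq_iff inverse_quat_def divide_simps)
      (simp_all add: qnormsq_def power2_eq_square algebra_simps)
next
  fix a b :: quat show "a / b = a * inverse b" by (simp add: divide_quat_def)
next
  show "inverse (0::quat) = 0" by (simp add: quat_eq_iff inverse_quat_def)
qed

definition qof_real :: "real \<Rightarrow> quat" where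
  "qof_real r = Quat r 0 0 0"

lemma qof_real_components [simp]:
  "qr (qof_real r) = r" "qi (qof_real r) = 0" "qj (qof_real r) = 0" "qk (qof_real r) = 0"
  by (simp_all add: qof_real_def)

lemma qof_real_1 [simp]: "qof_real 1 = 1"
  by (simp add: quat_eq_iff)

lemma qof_real_commute: "qof_real r * a = a * qof_real r"
  by (simp add: quat_eq_iff)

lemma qcnj_components [simp]:
  "qr (qcnj q) = qr q" "qi (qcnj q) = - qi q" "qj (qcnj q) = - qj q" "qk (qcnj q) = - qk q"
  by (simp_all add: qcnj_def)

lemma qcnj_mult: "qcnj (a * b) = qcnj b * qcnj a"
  by (simp add: quat_eq_iff algebra_simps)

lemma qcnj_add: "qcnj (a + b) = qcnj a + qcnj b"
  by (simp add: quat_eq_iff)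

lemma qcnj_diff: "qcnj (a - b) = qcnj a - qcnj b"
  by (simp add: quat_eq_iff)

lemma qcnj_qcnj [simp]: "qcnj (qcnj a) = a"
  by (simp add: quat_eq_iff)

lemma qcnj_0 [simp]: "qcnj 0 = 0" and qcnj_1 [simp]: "qcnj 1 = 1"
  by (simp_all add: quat_eq_iff)

lemma qcnj_eq_0_iff [simp]: "qcnj a = 0 \<longleftrightarrow> a = 0"
  by (metis qcnj_0 qcnj_qcnj)

lemma qcnj_eq_self_iff: "qcnj a = a \<longleftrightarrow> a = qof_real (qr a)"
  by (auto simp: quat_eq_iff)

lemma qcnj_sum: "qcnj (sum f A) = (\<Sum>x\<in>A. qcnj (f x))"
  by (induction A rule: infinite_finite_induct) (simp_all add: qcnj_add)

lemma qr_sum: "qr (sum f A) = (\<Sum>x\<in>A. qr (f x))"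
  by (induction A rule: infinite_finite_induct) simp_all

lemma qcnj_inverse: "qcnj (inverse a) = inverse (qcnj a)"
proof (cases "a = 0")
  case False
  then have "qcnj a * qcnj (inverse a) = 1"
    by (metis qcnj_1 qcnj_mult left_inverse)
  then show ?thesis by (metis inverse_unique)
qed simp

lemma mult_qcnj_self: "a * qcnj a = qof_real (qnormsq a)"
  and qcnj_mult_self: "qcnj a * a = qof_real (qnormsq a)"
  by (simp_all add: quat_eq_iff qnormsq_def power2_eq_square algebra_simps)

lemma qnormsq_mult: "qnormsq (a * b) = qnormsq a * qnormsq b"
  by (simp add: qnormsq_def power2_eq_square algebra_simps)

lemma qnorm_eq_sqrt_qnormsq: "qnorm a = sqrt (qnormsq a)"
  by (simp add: qnorm_def qnormsq_def)

lemma qnorm_mult: "qnorm (a * b) = qnorm a * qnorm b"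
  by (simp add: qnorm_eq_sqrt_qnormsq qnormsq_mult real_sqrt_mult)

lemma qnorm_qcnj: "qnorm (qcnj a) = qnorm a"
  by (simp add: qnorm_def)

lemma qnorm_eq_1_iff: "qnorm a = 1 \<longleftrightarrow> qnormsq a = 1"
  by (simp add: qnorm_eq_sqrt_qnormsq)

lemma unit_qcnj_mult: "qnormsq a = 1 \<Longrightarrow> qcnj a * a = 1"
  and unit_mult_qcnj: "qnormsq a = 1 \<Longrightarrow> a * qcnj a = 1"
  by (simp_all add: qcnj_mult_self mult_qcnj_self)

lemma quat_mult_eq_1_imp_eq_inverse: "(x::quat) * y = 1 \<Longrightarrow> x = inverse y"
  by (metis inverse_unique inverse_inverse_eq)

section \<open>The Hermitian form and the group \<open>Sp(n,1)\<close>\<close>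

declare sum.cl_ivl_Suc [simp del]

lemma rscale_1 [simp]: "rscale z 1 = z"
  by (simp add: rscale_def)

lemma rscale_rscale: "rscale (rscale z a) b = rscale z (a * b)"
  by (simp add: rscale_def mult.assoc)

lemma hvec_diff: "hvec n z \<Longrightarrow> hvec n w \<Longrightarrow> hvec n (z - w)"
  by (simp add: hvec_def)

lemma hvec_rscale: "hvec n z \<Longrightarrow> hvec n (rscale z c)"
  by (simp add: hvec_def rscale_def)

lemma hvec_mv: "hvec n (mv n C z)"
  by (simp add: hvec_def mv_def)

lemma hform_diff_left: "hform n (z - z') w = hform n z w - hform n z' w"
  by (simp add: hform_def algebra_simps sum_subtractf)

lemma hform_diff_right: "hform n z (w - w') = hform n z w - hform n z w'"
  by (simp add: hform_def algebra_simps sum_subtractf qcnj_diff)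

lemma hform_rscale_left: "hform n (rscale z c) w = hform n z w * c"
  by (simp add: hform_def rscale_def algebra_simps sum_distrib_right)

lemma hform_rscale_right: "hform n z (rscale w c) = qcnj c * hform n z w"
  by (simp add: hform_def rscale_def algebra_simps sum_distrib_left qcnj_mult)

lemma qcnj_hform: "qcnj (hform n z w) = hform n w z"
  by (simp add: hform_def qcnj_add qcnj_mult qcnj_sum algebra_simps)

lemma hform_self_real: "hform n z z = qof_real (qr (hform n z z))"
  by (metis qcnj_hform qcnj_eq_self_iff)

definition idm :: "nat \<Rightarrow> nat \<Rightarrow> nat \<Rightarrow> quat" where
  "idm n = (\<lambda>i j. if i = j \<and> i \<in> {1..n+1} then 1 else 0)"

definition mmul :: "nat \<Rightarrow> (nat \<Rightarrow> nat \<Rightarrow> quat) \<Rightarrow> (nat \<Rightarrow> nat \<Rightarrow> quat) \<Rightarrow> nat \<Rightarrow> nat \<Rightarrow> quat"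
  where "mmul n M N =
    (\<lambda>i j. if i \<in> {1..n+1} \<and> j \<in> {1..n+1} then (\<Sum>k=1..n+1. M i k * N k j) else 0)"

lemma sum_idm: "i \<in> {1..n+1} \<Longrightarrow> (\<Sum>j=1..n+1. idm n i j * z j) = z i"
  by (simp add: idm_def if_distrib[of "\<lambda>x. x * _"] sum.delta cong: if_cong)

lemma mv_mmul: "mv n (mmul n M N) z = mv n M (mv n N z)"
proof (rule ext)
  fix i
  show "mv n (mmul n M N) z i = mv n M (mv n N z) i"
  proof (cases "i \<in> {1..n+1}")
    case True
    have "mv n (mmul n M N) z i = (\<Sum>j=1..n+1. \<Sum>k=1..n+1. M i k * N k j * z j)"
      using True by (simp add: mv_def mmul_def sum_distrib_right)
    also have "\<dots> = (\<Sum>k=1..n+1. \<Sum>j=1..n+1. M i k * N k j * z j)"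
      by (rule sum.swap)
    also have "\<dots> = mv n M (mv n N z) i"
      using True by (simp add: mv_def sum_distrib_left mult.assoc)
    finally show ?thesis .
  qed (auto simp: mv_def)
qed

lemma Sp_n1_hform:
  "C \<in> Sp_n1 n \<Longrightarrow> hvec n z \<Longrightarrow> hvec n w \<Longrightarrow> hform n (mv n C z) (mv n C w) = hform n z w"
  by (simp add: Sp_n1_def)

lemma Sp_n1_mmul:
  assumes M: "M \<in> Sp_n1 n" and N: "N \<in> Sp_n1 n"
  shows "mmul n M N \<in> Sp_n1 n"
proof -
  obtain DM where DM: "hmat n DM"
    "\<And>z. hvec n z \<Longrightarrow> mv n DM (mv n M z) = z \<and> mv n M (mv n DM z) = z"
    using M by (auto simp: Sp_n1_def)
  obtain DN where DN: "hmat n DN"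
    "\<And>z. hvec n z \<Longrightarrow> mv n DN (mv n N z) = z \<and> mv n N (mv n DN z) = z"
    using N by (auto simp: Sp_n1_def)
  have "hmat n (mmul n M N)" "hmat n (mmul n DN DM)"
    by (auto simp: hmat_def mmul_def)
  moreover have "hform n (mv n (mmul n M N) z) (mv n (mmul n M N) w) = hform n z w"
    if "hvec n z" "hvec n w" for z w
    using that M N by (simp add: mv_mmul Sp_n1_hform hvec_mv)
  moreover have "mv n (mmul n DN DM) (mv n (mmul n M N) z) = z"
      "mv n (mmul n M N) (mv n (mmul n DN DM) z) = z" if "hvec n z" for z
    using that DM DN by (simp_all add: mv_mmul hvec_mv)
  ultimately show ?thesis unfolding Sp_n1_def by blast
qed

definition tau :: "nat \<Rightarrow> nat \<Rightarrow> nat" where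
  "tau n j = (if j = 1 then n+1 else if j = n+1 then 1 else j)"

lemma hform_eq_sum_tau:
  assumes "n \<ge> 1"
  shows "hform n z w = (\<Sum>j=1..n+1. qcnj (w (tau n j)) * z j)"
proof -
  let ?f = "\<lambda>j. qcnj (w (tau n j)) * z j"
  have split: "{1..n+1} = insert 1 (insert (n+1) {2..n})" "1 \<notin> insert (n+1) {2..n}"
      "n+1 \<notin> {2..n}"
    using assms by auto
  have "(\<Sum>j=1..n+1. ?f j) = ?f 1 + (?f (n+1) + (\<Sum>j=2..n. ?f j))"
    unfolding split(1) using split(2,3) by simp
  moreover have "(\<Sum>j=2..n. ?f j) = (\<Sum>j=2..n. qcnj (w j) * z j)"
    by (rule sum.cong) (auto simp: tau_def)
  ultimately show ?thesis
    using assms by (simp add: tau_def hform_def algebra_simps)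
qed

text \<open>The matrix of \<open>z \<mapsto> z - d s \<langle>z,d\<rangle>\<close>.\<close>
definition qreflection :: "nat \<Rightarrow> (nat \<Rightarrow> quat) \<Rightarrow> quat \<Rightarrow> nat \<Rightarrow> nat \<Rightarrow> quat" where
  "qreflection n d s = (\<lambda>i j. idm n i j
     - (if i \<in> {1..n+1} \<and> j \<in> {1..n+1} then d i * s * qcnj (d (tau n j)) else 0))"

lemma mv_qreflection:
  assumes "n \<ge> 1" "hvec n d" "hvec n z"
  shows "mv n (qreflection n d s) z = z - rscale d (s * hform n z d)"
proof (rule ext)
  fix i
  show "mv n (qreflection n d s) z i = (z - rscale d (s * hform n z d)) i"
  proof (cases "i \<in> {1..n+1}")
    case True
    have "mv n (qreflection n d s) z i
        = (\<Sum>j=1..n+1. idm n i j * z j) - d i * s * (\<Sum>j=1..n+1. qcnj (d (tau n j)) * z j)"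
      using True
      by (simp add: mv_def qreflection_def left_diff_distrib sum_subtractf mult.assoc
          sum_distrib_left)
    also have "\<dots> = z i - d i * s * hform n z d"
      by (simp only: sum_idm[OF True] hform_eq_sum_tau[OF assms(1)])
    finally show ?thesis
      using True by (simp add: rscale_def mult.assoc)
  next
    case False
    then show ?thesis using assms by (auto simp: mv_def rscale_def hvec_def)
  qed
qed

lemma qreflection_hform:
  assumes n: "n \<ge> 1" and d: "hvec n d" and s: "s + qcnj s = qcnj s * hform n d d * s"
    and z: "hvec n z" and w: "hvec n w"
  shows "hform n (mv n (qreflection n d s) z) (mv n (qreflection n d s) w) = hform n z w"
proof -
  define \<alpha> where "\<alpha> = hform n z d"
  define \<beta> where "\<beta> = hform n w d"
  define N where "N = hform n d d"
  have dw: "hform n d w = qcnj \<beta>" by (simp add: \<beta>_def qcnj_hform)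
  have "hform n (mv n (qreflection n d s) z) (mv n (qreflection n d s) w)
      = hform n z w - qcnj \<beta> * (s + qcnj s) * \<alpha> + qcnj \<beta> * (qcnj s * N * s) * \<alpha>"
    using n d z w
    by (simp add: mv_qreflection hform_diff_left hform_diff_right hform_rscale_left
        hform_rscale_right qcnj_mult dw \<alpha>_def[symmetric] \<beta>_def[symmetric] N_def[symmetric]
        algebra_simps)
  then show ?thesis using s by (simp add: N_def)
qed

lemma qreflection_inverse:
  assumes n: "n \<ge> 1" and d: "hvec n d" and s: "s + qcnj s = qcnj s * hform n d d * s"
    and z: "hvec n z"
  shows "mv n (qreflection n d (qcnj s)) (mv n (qreflection n d s) z) = z"
proof -
  define \<alpha> where "\<alpha> = hform n z d"
  define N where "N = hform n d d"
  have "hform n (mv n (qreflection n d s) z) d = \<alpha> - N * (s * \<alpha>)"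
    using n d z by (simp add: mv_qreflection hform_diff_left hform_rscale_left \<alpha>_def N_def)
  then have "mv n (qreflection n d (qcnj s)) (mv n (qreflection n d s) z)
      = z - rscale d (s * \<alpha>) - rscale d (qcnj s * (\<alpha> - N * (s * \<alpha>)))"
    using n d z by (simp add: mv_qreflection[OF n d hvec_mv]) (simp add: mv_qreflection \<alpha>_def)
  also have "\<dots> = z - rscale d ((s + qcnj s - qcnj s * N * s) * \<alpha>)"
    by (simp add: rscale_def fun_eq_iff algebra_simps)
  also have "\<dots> = z" using s by (simp add: N_def rscale_def fun_eq_iff)
  finally show ?thesis .
qed

lemma qreflection_in_Sp_n1:
  assumes n: "n \<ge> 1" and d: "hvec n d" and s: "s + qcnj s = qcnj s * hform n d d * s"
  shows "qreflection n d s \<in> Sp_n1 n"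
proof -
  obtain r where r: "hform n d d = qof_real r"
    using hform_self_real by blast
  have "qcnj s * qof_real r * s = qof_real r * (qcnj s * s)"
    "s * qof_real r * qcnj s = qof_real r * (s * qcnj s)"
    by (metis qof_real_commute mult.assoc)+
  then have s': "qcnj s + qcnj (qcnj s) = qcnj (qcnj s) * hform n d d * qcnj s"
    using s by (simp add: r mult_qcnj_self qcnj_mult_self add.commute)
  have "hmat n (qreflection n d s)" "hmat n (qreflection n d (qcnj s))"
    by (auto simp: hmat_def qreflection_def idm_def)
  then show ?thesis
    unfolding Sp_n1_def
    using qreflection_hform[OF n d s] qreflection_inverse[OF n d s]
      qreflection_inverse[OF n d s', simplified]
    by blast
qed

text \<open>Given \<open>\<langle>u,u\<rangle> = \<langle>u',u'\<rangle>\<close> and \<open>d = u - u'\<close> anisotropic, one has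
  \<open>\<langle>d,d\<rangle> = w + w\<^sup>-\<close> for \<open>w = \<langle>u,d\<rangle> \<noteq> 0\<close>, so \<open>s = w\<^sup>-\<^sup>1\<close> meets the isometry condition.\<close>
lemma qreflection_exchanging:
  assumes n: "n \<ge> 1" and u: "hvec n u" and u': "hvec n u'"
    and eq: "hform n u u = hform n u' u'" and aniso: "hform n (u - u') (u - u') \<noteq> 0"
  shows "\<exists>R \<in> Sp_n1 n. mv n R u = u'
           \<and> (\<forall>x. hvec n x \<longrightarrow> hform n x (u - u') = 0 \<longrightarrow> mv n R x = x)"
proof -
  define d where "d = u - u'"
  have d: "hvec n d" using u u' by (simp add: d_def hvec_diff)
  define w where "w = hform n u d"
  define s where "s = inverse w"
  have dd: "hform n d d = w + qcnj w"
    using eq by (simp add: w_def d_def qcnj_hform qcnj_diff hform_diff_left hform_diff_right)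
  have w0: "w \<noteq> 0" using aniso dd by (auto simp: d_def)
  have "qcnj s * hform n d d * s = inverse (qcnj w) + inverse w"
    using w0 by (simp add: s_def dd qcnj_inverse algebra_simps mult.assoc)
  then have s: "s + qcnj s = qcnj s * hform n d d * s"
    by (simp add: s_def qcnj_inverse add.commute)
  have "mv n (qreflection n d s) u = u - rscale d (s * w)"
    by (simp add: mv_qreflection[OF n d u] w_def)
  also have "\<dots> = u'"
    using w0 by (simp add: s_def d_def rscale_def fun_eq_iff)
  finally have "mv n (qreflection n d s) u = u'" .
  moreover have "mv n (qreflection n d s) x = x" if "hvec n x" "hform n x (u - u') = 0" for x
    using mv_qreflection[OF n d that(1)] that(2) by (simp add: d_def rscale_def fun_eq_iff)
  ultimately show ?thesis using qreflection_in_Sp_n1[OF n d s] by blast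
qed

section \<open>Witt's extension theorem in signature \<open>(n,1)\<close>\<close>

lemma qr_hform_self_if_last_zero:
  assumes "v (n+1) = 0"
  shows "qr (hform n v v) = (\<Sum>i=2..n. qnormsq (v i))"
  using assms by (simp add: hform_def qr_sum qcnj_mult_self)

lemma qr_hform_self_if_last_zero_nonneg:
  assumes "v (n+1) = 0"
  shows "qr (hform n v v) \<ge> 0"
  unfolding qr_hform_self_if_last_zero[of v n, OF assms] by (rule sum_nonneg) (simp add: qnormsq_nonneg)

lemma hform_perp_negative_anisotropic:
  assumes y: "qr (hform n y y) < 0" and d: "hvec n d" and d0: "d \<noteq> (\<lambda>_. 0)"
    and orth: "hform n d y = 0"
  shows "hform n d d \<noteq> 0"
proof
  assume dd: "hform n d d = 0"
  have yd: "hform n y d = 0" using orth qcnj_hform[of n d y] by simp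
  show False
  proof (cases "d (n+1) = 0")
    case False
    define v where "v = y - rscale d (inverse (d (n+1)) * y (n+1))"
    have "v (n+1) = 0"
      using False by (simp add: v_def rscale_def mult.assoc[symmetric])
    moreover have "hform n v v = hform n y y"
      by (simp add: v_def hform_diff_left hform_diff_right hform_rscale_left hform_rscale_right
          dd orth yd)
    ultimately show False using qr_hform_self_if_last_zero_nonneg[of v n] y by simp
  next
    case True
    have "(\<Sum>i=2..n. qnormsq (d i)) = 0"
      using qr_hform_self_if_last_zero[of d n, OF True] dd by simp
    then have mid: "d i = 0" if "i \<in> {2..n}" for i
      using that by (simp add: sum_nonneg_eq_0_iff qnormsq_nonneg qnormsq_eq_0_iff)
    obtain i where i: "d i \<noteq> 0" using d0 by auto
    have "i \<in> {1..n+1}" using d i by (auto simp: hvec_def)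
    then have "d 1 \<noteq> 0" using i mid True by (cases "i = 1"; cases "i = n+1") auto
    moreover have "hform n d y = qcnj (y (n+1)) * d 1"
      using mid True by (simp add: hform_def)
    ultimately have "y (n+1) = 0" using orth by simp
    then show False using qr_hform_self_if_last_zero_nonneg[of y n] y by simp
  qed
qed

text \<open>When \<open>y - y'\<close> is isotropic, go through \<open>w = y c\<close> for a unit \<open>c = \<plusminus>i\<close> chosen so that
  neither \<open>y - w\<close> nor \<open>w - y'\<close> is isotropic.\<close>
lemma Sp_n1_transitive_on_negative:
  assumes n: "n \<ge> 1" and y: "hvec n y" and y': "hvec n y'"
    and eq: "hform n y y = hform n y' y'" and neg: "qr (hform n y y) < 0"
  shows "\<exists>C \<in> Sp_n1 n. mv n C y = y'"
proof (cases "hform n (y - y') (y - y') = 0")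
  case False
  then show ?thesis using qreflection_exchanging[OF n y y' eq] by blast
next
  case True
  define q where "q = qr (hform n y y)"
  have yy: "hform n y y = qof_real q" using hform_self_real[of n y] by (simp add: q_def)
  define h where "h = hform n y y'"
  define c where "c = (if qr (h * Quat 0 1 0 0) \<noteq> q then Quat 0 1 0 0 else - Quat 0 1 0 0)"
  have hc: "qr (h * c) \<noteq> q" using neg by (auto simp: c_def q_def)
  have c1: "qnormsq c = 1" by (simp add: c_def qnormsq_def)
  have c_ne_1: "1 - c \<noteq> 0" by (simp add: c_def quat_eq_iff)
  define w where "w = rscale y c"
  have w: "hvec n w" using y by (simp add: w_def hvec_rscale)
  have rescaled: "hform n (rscale y a) (rscale y a) = qof_real (q * qnormsq a)" for a
  proof -
    have "hform n (rscale y a) (rscale y a) = qcnj a * qof_real q * a"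
      by (simp add: hform_rscale_left hform_rscale_right yy mult.assoc)
    also have "\<dots> = qof_real q * (qcnj a * a)" by (metis qof_real_commute mult.assoc)
    finally show ?thesis by (simp add: qcnj_mult_self quat_eq_iff)
  qed
  have ww: "hform n w w = qof_real q" using rescaled[of c] c1 by (simp add: w_def)
  have "y - w = rscale y (1 - c)" by (simp add: w_def rscale_def fun_eq_iff algebra_simps)
  then have "hform n (y - w) (y - w) \<noteq> 0"
    using rescaled[of "1 - c"] neg qnormsq_pos[OF c_ne_1] by (simp add: quat_eq_iff q_def)
  then obtain R1 where R1: "R1 \<in> Sp_n1 n" "mv n R1 y = w"
    using qreflection_exchanging[OF n y w] yy ww by auto
  have wy': "hform n w y' = h * c" by (simp add: w_def hform_rscale_left h_def)
  moreover have "hform n y' w = qcnj (h * c)" using qcnj_hform[of n w y'] wy' by simp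
  moreover have "hform n y' y' = qof_real q" using eq yy by simp
  ultimately have "hform n (w - y') (w - y') = qof_real q - h * c - qcnj (h * c) + qof_real q"
    using ww by (simp add: hform_diff_left hform_diff_right algebra_simps)
  then have "qr (hform n (w - y') (w - y')) = 2 * q - 2 * qr (h * c)"
    by simp
  then have "hform n (w - y') (w - y') \<noteq> 0" using hc by auto
  then obtain R2 where R2: "R2 \<in> Sp_n1 n" "mv n R2 w = y'"
    using qreflection_exchanging[OF n w y'] yy ww eq by auto
  show ?thesis
    using R1 R2 Sp_n1_mmul[OF R2(1) R1(1)] by (metis mv_mmul)
qed

text \<open>No linear independence is needed: every difference \<open>u - u'\<close> that occurs is orthogonal
  to the negative vector \<open>g 0\<close> and hence anisotropic.\<close>
lemma Sp_n1_witt_extension: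
  fixes f g :: "nat \<Rightarrow> nat \<Rightarrow> quat"
  assumes "n \<ge> 1" and "\<And>i. i \<le> m \<Longrightarrow> hvec n (f i) \<and> hvec n (g i)"
    and "\<And>i j. i \<le> m \<Longrightarrow> j \<le> m \<Longrightarrow> hform n (f i) (f j) = hform n (g i) (g j)"
    and "qr (hform n (f 0) (f 0)) < 0"
  shows "\<exists>C \<in> Sp_n1 n. \<forall>i\<le>m. mv n C (f i) = g i"
  using assms(2,3)
proof (induction m)
  case 0
  then show ?case
    using Sp_n1_transitive_on_negative[OF assms(1), of "f 0" "g 0"] assms(4) by auto
next
  case (Suc m)
  have hf: "hvec n (f i)" and hg: "hvec n (g i)" if "i \<le> Suc m" for i
    using Suc.prems(1)[OF that] by auto
  note gram = Suc.prems(2)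
  obtain C where C: "C \<in> Sp_n1 n" "\<And>i. i \<le> m \<Longrightarrow> mv n C (f i) = g i"
    using Suc.IH Suc.prems by auto
  define u where "u = mv n C (f (Suc m))"
  define u' where "u' = g (Suc m)"
  have u: "hvec n u" and u': "hvec n u'" by (simp_all add: u_def u'_def hvec_mv hg)
  have eq: "hform n u u = hform n u' u'"
    using Sp_n1_hform[OF C(1) hf hf] gram by (simp add: u_def u'_def)
  have orth: "hform n (u - u') (g i) = 0" if "i \<le> m" for i
    using Sp_n1_hform[OF C(1) hf hf, of "Suc m" i] C(2) gram[of "Suc m" i] that
    by (simp add: u_def u'_def hform_diff_left)
  show ?case
  proof (cases "u = u'")
    case True
    then show ?thesis using C by (auto simp: u_def u'_def le_Suc_eq)
  next
    case False
    have "hform n (u - u') (u - u') \<noteq> 0"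
    proof (rule hform_perp_negative_anisotropic[OF _ hvec_diff[OF u u'] _ orth])
      show "qr (hform n (g 0) (g 0)) < 0" using assms(4) gram[of 0 0] by simp
      show "u - u' \<noteq> (\<lambda>_. 0)" using False by (simp add: fun_eq_iff)
    qed simp
    then obtain R where R: "R \<in> Sp_n1 n" "mv n R u = u'"
      "\<And>x. hvec n x \<Longrightarrow> hform n x (u - u') = 0 \<Longrightarrow> mv n R x = x"
      using qreflection_exchanging[OF assms(1) u u' eq] by blast
    have "mv n (mmul n R C) (f i) = g i" if "i \<le> Suc m" for i
    proof (cases "i = Suc m")
      case True
      then show ?thesis using R by (simp add: mv_mmul u_def u'_def)
    next
      case False
      then have "i \<le> m" using that by simp
      moreover have "hform n (g i) (u - u') = 0" if "i \<le> m"
        using orth[OF that] qcnj_hform[of n "u - u'" "g i"] by simp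
      ultimately show ?thesis using R(3) hg C(2) by (simp add: mv_mmul)
    qed
    then show ?thesis using Sp_n1_mmul[OF R(1) C(1)] by blast
  qed
qed

section \<open>Gram matrices and their \<open>Sp(1)\<close>-orbits\<close>

lemma associated_tuple_hvec:
  assumes "associated_tuple n A B p" "n \<ge> 2" "i \<in> {1..2*n}"
  shows "hvec n (p i)"
proof -
  have w: "wns_data n A B (p 1) (p 2) (p 3) (p 4) (\<lambda>k. p (k + 4)) (\<lambda>k. p (k + (n + 2)))"
    using assms(1) by (simp add: associated_tuple_def)
  consider "i \<in> {1..4}" | "i \<in> {5..n+2}" | "i \<in> {n+3..2*n}"
    using assms(3) by force
  then show ?thesis
  proof cases
    case 1
    then have "i = 1 \<or> i = 2 \<or> i = 3 \<or> i = 4" by auto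
    then show ?thesis
      using w by (auto simp: wns_data_def attracting_vec_def repelling_vec_def null_vec_def)
  next
    case 2
    then have "i - 4 \<in> {1..n-2}" "i - 4 + 4 = i" by auto
    then show ?thesis using w unfolding wns_data_def pos_eigvec_def pos_vec_def by metis
  next
    case 3
    then have "i - (n+2) \<in> {1..n-2}" "i - (n+2) + (n+2) = i" by auto
    then show ?thesis using w unfolding wns_data_def pos_eigvec_def pos_vec_def by metis
  qed
qed

lemma associated_tuple_null:
  assumes "associated_tuple n A B p"
  shows "hform n (p 1) (p 1) = 0" "hform n (p 2) (p 2) = 0"
  using assms
  by (auto simp: associated_tuple_def wns_data_def attracting_vec_def repelling_vec_def
      null_vec_def)

lemma gram_eq_hform: "i \<in> {1..2*n} \<Longrightarrow> j \<in> {1..2*n} \<Longrightarrow> gram n p i j = hform n (p i) (p j)"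
  by (simp add: gram_def)

lemma sp1_orbit_conj_subset:
  assumes "qnorm \<mu> = 1"
  shows "sp1_orbit (\<lambda>i j. \<mu> * G i j * qcnj \<mu>) \<subseteq> sp1_orbit G"
proof
  fix H assume "H \<in> sp1_orbit (\<lambda>i j. \<mu> * G i j * qcnj \<mu>)"
  then obtain \<kappa> where "qnorm \<kappa> = 1" "H = (\<lambda>i j. \<kappa> * (\<mu> * G i j * qcnj \<mu>) * qcnj \<kappa>)"
    by (auto simp: sp1_orbit_def)
  moreover have "\<kappa> * (\<mu> * x * qcnj \<mu>) * qcnj \<kappa> = (\<kappa> * \<mu>) * x * qcnj (\<kappa> * \<mu>)" for x
    by (simp add: qcnj_mult mult.assoc)
  ultimately show "H \<in> sp1_orbit G"
    using assms by (auto simp: sp1_orbit_def qnorm_mult)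
qed

lemma sp1_orbit_conj:
  assumes "qnorm \<mu> = 1"
  shows "sp1_orbit (\<lambda>i j. \<mu> * G i j * qcnj \<mu>) = sp1_orbit G"
proof
  have "\<mu> * qcnj \<mu> = 1" "qcnj \<mu> * \<mu> = 1"
    using assms by (simp_all add: qnorm_eq_1_iff unit_mult_qcnj unit_qcnj_mult)
  then have "G = (\<lambda>i j. qcnj \<mu> * (\<mu> * G i j * qcnj \<mu>) * qcnj (qcnj \<mu>))"
    by (simp add: mult.assoc flip: mult.assoc[of "qcnj \<mu>" \<mu>])
  then show "sp1_orbit G \<subseteq> sp1_orbit (\<lambda>i j. \<mu> * G i j * qcnj \<mu>)"
    using sp1_orbit_conj_subset[of "qcnj \<mu>" "\<lambda>i j. \<mu> * G i j * qcnj \<mu>"] assms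
    by (simp add: qnorm_qcnj)
qed (rule sp1_orbit_conj_subset[OF assms])

lemma sp1_orbit_eqD:
  assumes "sp1_orbit G = sp1_orbit G'"
  obtains \<nu> where "qnorm \<nu> = 1" "G = (\<lambda>i j. \<nu> * G' i j * qcnj \<nu>)"
proof -
  have "G \<in> sp1_orbit G"
    unfolding sp1_orbit_def by (auto intro!: exI[of _ 1] simp: qnorm_def)
  then show ?thesis using assms that by (auto simp: sp1_orbit_def)
qed

lemma gram_normalized_rescaling_unit:
  assumes n: "n \<ge> 2" and N: "gram_normalized n p" and N': "gram_normalized n p'"
    and G: "\<And>i j. i \<in> {1..2*n} \<Longrightarrow> j \<in> {1..2*n} \<Longrightarrow>
              gram n p' i j = qcnj (c j) * gram n p i j * c i"
  shows "qnorm (c 2) = 1 \<and> (\<forall>i\<in>{1..2*n}. c i = c 2)"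
proof -
  have row1: "gram n p 1 k = 1" "gram n p' 1 k = 1" if "k \<in> {2,3,4} \<union> {n+3..2*n}" for k
    using N N' that by (auto simp: gram_normalized_def Let_def)
  have row3: "gram n p 3 j = 1" "gram n p' 3 j = 1" if "j \<in> {5..n+2}" for j
    using N N' that by (auto simp: gram_normalized_def Let_def)
  have g23: "qnorm (gram n p 2 3) = 1" "qnorm (gram n p' 2 3) = 1"
    using N N' by (auto simp: gram_normalized_def Let_def)
  have I: "1 \<in> {1..2*n}" "2 \<in> {1..2*n}" "3 \<in> {1..2*n}" using n by auto
  have inv: "qcnj (c k) = inverse (c i)"
    if "i \<in> {1..2*n}" "k \<in> {1..2*n}" "gram n p i k = 1" "gram n p' i k = 1" for i k
    using G[OF that(1,2)] that(3,4) by (simp add: quat_mult_eq_1_imp_eq_inverse)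
  have inv2: "qcnj (c 2) = inverse (c 1)"
    using inv[OF I(1,2) row1] by simp
  have from_row1: "c k = c 2" if k: "k \<in> {2,3,4} \<union> {n+3..2*n}" for k
  proof -
    have "k \<in> {1..2*n}" using k n by auto
    then have "qcnj (c k) = qcnj (c 2)" using inv[OF I(1) _ row1[OF k]] inv2 by simp
    then show ?thesis by (metis qcnj_qcnj)
  qed
  have "qnorm (gram n p' 2 3) = qnorm (c 3) * qnorm (gram n p 2 3) * qnorm (c 2)"
    using G[OF I(2,3)] by (simp add: qnorm_mult qnorm_qcnj)
  then have "qnorm (c 2) * qnorm (c 2) = 1"
    using g23 from_row1[of 3] by simp
  moreover have "qnorm (c 2) \<ge> 0" by (simp add: qnorm_def)
  ultimately have unit: "qnorm (c 2) = 1"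
    using power2_eq_1_iff[of "qnorm (c 2)"] by (auto simp: power2_eq_square)
  then have unit_inv: "qcnj (c 2) = inverse (c 2)"
    using unit_qcnj_mult[of "c 2"] by (simp add: qnorm_eq_1_iff quat_mult_eq_1_imp_eq_inverse)
  have "c i = c 2" if i: "i \<in> {1..2*n}" for i
  proof -
    consider "i = 1" | "i \<in> {2,3,4} \<union> {n+3..2*n}" | "i \<in> {5..n+2}"
      using i by force
    then show ?thesis
    proof cases
      case 1
      then show ?thesis using inv2 unit_inv by (metis inverse_inverse_eq)
    next
      case 2
      then show ?thesis by (rule from_row1)
    next
      case 3
      then have "qcnj (c i) = qcnj (c 2)"
        using inv[OF I(3) i row3] from_row1[of 3] unit_inv by simp
      then show ?thesis by (metis qcnj_qcnj)
    qed
  qed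
  then show ?thesis using unit by blast
qed

lemma congruent_tuples_sp1_orbit_eq:
  assumes n: "n \<ge> 2" and tp: "associated_tuple n A B p"
    and N: "gram_normalized n p" and N': "gram_normalized n p'"
    and C: "C \<in> Sp_n1 n" and sp: "\<forall>i\<in>{1..2*n}. same_point (mv n C (p i)) (p' i)"
  shows "sp1_orbit (gram n p) = sp1_orbit (gram n p')"
proof -
  obtain c where c: "\<And>i. i \<in> {1..2*n} \<Longrightarrow> p' i = rscale (mv n C (p i)) (c i)"
    using sp unfolding same_point_def by metis
  have "gram n p' i j = qcnj (c j) * gram n p i j * c i"
    if "i \<in> {1..2*n}" "j \<in> {1..2*n}" for i j
    using that c Sp_n1_hform[OF C associated_tuple_hvec[OF tp n] associated_tuple_hvec[OF tp n]]
    by (simp add: gram_eq_hform hform_rscale_left hform_rscale_right mult.assoc)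
  then obtain b where b: "qnorm b = 1" "\<And>i. i \<in> {1..2*n} \<Longrightarrow> c i = b"
    using gram_normalized_rescaling_unit[OF n N N'] by metis
  have "gram n p' = (\<lambda>i j. qcnj b * gram n p i j * qcnj (qcnj b))"
  proof (intro ext)
    fix i j
    show "gram n p' i j = qcnj b * gram n p i j * qcnj (qcnj b)"
      using \<open>\<And>i j. _ \<Longrightarrow> _ \<Longrightarrow> gram n p' i j = _\<close>[of i j] b(2)[of i] b(2)[of j]
      by (cases "i \<in> {1..2*n} \<and> j \<in> {1..2*n}") (auto simp: gram_def)
  qed
  then show ?thesis
    using sp1_orbit_conj[of "qcnj b" "gram n p"] b(1) by (simp add: qnorm_qcnj)
qed

text \<open>The negative vector \<open>p\<^sub>1 - p\<^sub>2\<close> is prepended to the tuple so that Witt's theorem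
  applies.\<close>
lemma sp1_orbit_eq_congruent_tuples:
  assumes n: "n \<ge> 2"
    and tp: "associated_tuple n A B p" and tp': "associated_tuple n A' B' p'"
    and N: "gram_normalized n p" and orbit: "sp1_orbit (gram n p) = sp1_orbit (gram n p')"
  shows "\<exists>C \<in> Sp_n1 n. \<forall>i\<in>{1..2*n}. same_point (mv n C (p i)) (p' i)"
proof -
  obtain \<nu> where \<nu>: "qnorm \<nu> = 1" "gram n p = (\<lambda>i j. \<nu> * gram n p' i j * qcnj \<nu>)"
    using sp1_orbit_eqD[OF orbit] by blast
  define P where "P i = rscale (p' i) (qcnj \<nu>)" for i
  have gram_P: "hform n (P i) (P j) = hform n (p i) (p j)"
    if "i \<in> {1..2*n}" "j \<in> {1..2*n}" for i j
    using that fun_cong[OF fun_cong[OF \<nu>(2)], of i j]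
    by (simp add: P_def hform_rscale_left hform_rscale_right gram_eq_hform mult.assoc)
  define f where "f k = (if k = 0 then p 1 - p 2 else p k)" for k
  define g where "g k = (if k = 0 then P 1 - P 2 else P k)" for k
  have I: "1 \<in> {1..2*n}" "2 \<in> {1..2*n}" and range: "\<And>i. i \<le> 2*n \<Longrightarrow> i \<noteq> 0 \<Longrightarrow> i \<in> {1..2*n}"
    using n by auto
  have hv: "hvec n (p i)" "hvec n (P i)" if "i \<in> {1..2*n}" for i
    using associated_tuple_hvec[OF tp n that] associated_tuple_hvec[OF tp' n that]
    by (simp_all add: P_def hvec_rscale)
  have "hvec n (f i) \<and> hvec n (g i)" if "i \<le> 2*n" for i
    using that hv[OF I(1)] hv[OF I(2)] hv[OF range] by (auto simp: f_def g_def hvec_diff)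
  moreover have "hform n (f i) (f j) = hform n (g i) (g j)" if "i \<le> 2*n" "j \<le> 2*n" for i j
    using gram_P[OF I(1) I(1)] gram_P[OF I(1) I(2)] gram_P[OF I(2) I(1)] gram_P[OF I(2) I(2)]
      gram_P[OF range range] gram_P[OF range I(1)] gram_P[OF range I(2)]
      gram_P[OF I(1) range] gram_P[OF I(2) range] that
    by (cases "i = 0"; cases "j = 0") (simp_all add: f_def g_def hform_diff_left hform_diff_right)
  moreover have "qr (hform n (f 0) (f 0)) < 0"
  proof -
    have "hform n (p 1) (p 2) = 1" using N I by (simp add: gram_normalized_def Let_def gram_eq_hform)
    then show ?thesis
      using associated_tuple_null[OF tp] qcnj_hform[of n "p 1" "p 2"]
      by (simp add: f_def hform_diff_left hform_diff_right)
  qed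
  ultimately obtain C where C: "C \<in> Sp_n1 n" "\<And>i. i \<le> 2*n \<Longrightarrow> mv n C (f i) = g i"
    using Sp_n1_witt_extension[of n "2*n" f g] n by auto
  have "same_point (mv n C (p i)) (p' i)" if i: "i \<in> {1..2*n}" for i
  proof -
    have "p' i = rscale (mv n C (p i)) \<nu>"
      using C(2)[of i] i \<nu>(1) unit_qcnj_mult[of \<nu>]
      by (auto simp: f_def g_def P_def rscale_rscale qnorm_eq_1_iff)
    moreover have "\<nu> \<noteq> 0" using \<nu>(1) by (auto simp: qnorm_def)
    ultimately show ?thesis unfolding same_point_def by auto
  qed
  then show ?thesis using C(1) by blast
qed

theorem mainTheorem8:
  fixes n :: nat
    and A B A' B' :: "nat \<Rightarrow> nat \<Rightarrow> quat"
    and p p' :: "nat \<Rightarrow> nat \<Rightarrow> quat"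
  assumes "n \<ge> 2"
    and "weakly_nonsingular n A B" and "weakly_nonsingular n A' B'"
    and "associated_tuple n A B p" and "associated_tuple n A' B' p'"
    and "gram_normalized n p" and "gram_normalized n p'"
  shows "(\<exists>C \<in> Sp_n1 n. \<forall>i\<in>{1..2*n}. same_point (mv n C (p i)) (p' i))
         \<longleftrightarrow> sp1_orbit (gram n p) = sp1_orbit (gram n p')"
  using congruent_tuples_sp1_orbit_eq[OF assms(1,4,6,7)]
    sp1_orbit_eq_congruent_tuples[OF assms(1,4,5,6)]
  by blast

end
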